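(* Let $\mu,w,w'\in\mathbb{R}^d$ and $\sigma_1,\dots,\sigma_d>0$, and let $P=N(\mu,\mathrm{diag}(\sigma_1^2,\dots,\sigma_d^2))$. Consider affine flows of the diagonal form $w_i\mapsto a_iw_i+b_i$ ($i=1,\dots,d$) with $a_i\neq 0$, and the problem of minimizing $D_{\mathrm{KL}}[P'\,\|\,P]$ over $(a_1,\dots,a_d,b_1,\dots,b_d)$, where $P'$ is the push-forward of $P$ under this flow, subject to the constraint $w_i'=a_iw_i+b_i$ for all $i$. Put $u_i=(w_i-\mu_i)/\sigma_i$ and $v_i=(w_i'-\mu_i)/\sigma_i$. Then the optimal transformation is given by $$a_i^\ast=\frac{u_iv_i+\delta_i\sqrt{4+u_i^2(4+v_i^2)}}{2(1+u_i^2)}$$ for some $\delta_i\in\{-1,+1\}$, and the posterior hyperparameters (the mean $\mu_i'$ and standard deviation $\sigma_i'$ of the $i$-th component of $P'$) are $$\sigma_i'=a_i^\ast\sigma_i,\qquad \mu_i'=a_i^\ast(\mu_i-w_i)+w_i'.$$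
   Context: $\mathrm{diag}(\cdot)$ denotes a diagonal matrix; subscripts $i$ denote vector components. The push-forward of $N(\mu,\mathrm{diag}(\sigma_i^2))$ under $w_i\mapsto a_iw_i+b_i$ is the Gaussian with independent components of mean $a_i\mu_i+b_i$ and variance $a_i^2\sigma_i^2$. $D_{\mathrm{KL}}$ is the Kullback–Leibler divergence. *)

theory Defs
  imports "HOL-Probability.Probability"
begin

text \<open>The diagonal Gaussian N(mu, diag(sigma_i^2)) on R^d, modelled as the product
  measure over the index set {..<d} (points are extensional functions nat => real).\<close>
definition diag_gaussian :: "nat \<Rightarrow> (nat \<Rightarrow> real) \<Rightarrow> (nat \<Rightarrow> real) \<Rightarrow> (nat \<Rightarrow> real) measure" where
  "diag_gaussian d \<mu> \<sigma> = (\<Pi>\<^sub>M i\<in>{..<d}. density lborel (normal_density (\<mu> i) (\<sigma> i)))"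

definition diag_flow :: "nat \<Rightarrow> (nat \<Rightarrow> real) \<Rightarrow> (nat \<Rightarrow> real) \<Rightarrow> (nat \<Rightarrow> real) \<Rightarrow> (nat \<Rightarrow> real)" where
  "diag_flow d a b = (\<lambda>x. \<lambda>i\<in>{..<d}. a i * x i + b i)"

definition pushforward :: "nat \<Rightarrow> (nat \<Rightarrow> real) \<Rightarrow> (nat \<Rightarrow> real) \<Rightarrow> (nat \<Rightarrow> real) \<Rightarrow> (nat \<Rightarrow> real)
    \<Rightarrow> (nat \<Rightarrow> real) measure" where
  "pushforward d \<mu> \<sigma> a b = distr (diag_gaussian d \<mu> \<sigma>) (diag_gaussian d \<mu> \<sigma>) (diag_flow d a b)"

text \<open>D_KL[P' || P] with natural logarithm; note KL_divergence b M N = D(N || M).\<close>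
definition KL_obj :: "nat \<Rightarrow> (nat \<Rightarrow> real) \<Rightarrow> (nat \<Rightarrow> real) \<Rightarrow> (nat \<Rightarrow> real) \<Rightarrow> (nat \<Rightarrow> real) \<Rightarrow> real" where
  "KL_obj d \<mu> \<sigma> a b = KL_divergence (exp 1) (diag_gaussian d \<mu> \<sigma>) (pushforward d \<mu> \<sigma> a b)"

definition feasible :: "nat \<Rightarrow> (nat \<Rightarrow> real) \<Rightarrow> (nat \<Rightarrow> real) \<Rightarrow> ((nat \<Rightarrow> real) \<times> (nat \<Rightarrow> real)) set" where
  "feasible d w w' = {(a, b). \<forall>i<d. a i \<noteq> 0 \<and> w' i = a i * w i + b i}"

end

theory Submission
  imports Defs
begin

text \<open>Both P and its push-forward P' are diagonal Gaussians, the i-th component of P' being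
  N(a_i mu_i + b_i, |a_i| sigma_i), so D_KL[P' || P] is a sum of one-dimensional Gaussian KL
  divergences. Eliminating b_i by the constraint and standardising, the i-th summand becomes
  -ln|a_i| + ((v_i - a_i u_i)^2 + a_i^2)/2 - 1/2, a function of a_i alone. On each half-line
  a > 0 and a < 0 it is strictly convex with its critical point at a root of
  (1 + u_i^2) a^2 - u_i v_i a - 1 = 0, and the two roots have opposite signs; hence a minimiser
  exists and every minimiser is one of the two roots. Since |a_i| sigma_i and a_i sigma_i
  give the same normal density, the marginals of P' have the stated form.\<close>

lemma distr_PiM_componentwise:
  assumes "finite I" and "product_sigma_finite M" and "product_sigma_finite N"
    and f: "\<And>i. i \<in> I \<Longrightarrow> f i \<in> measurable (M i) (N i)"
    and distr_f: "\<And>i. i \<in> I \<Longrightarrow> distr (M i) (N i) (f i) = N i"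
  shows "distr (PiM I M) (PiM I N) (\<lambda>x. \<lambda>i\<in>I. f i (x i)) = PiM I N"
proof -
  interpret M: product_sigma_finite M by fact
  interpret N: product_sigma_finite N by fact
  have F: "(\<lambda>x. \<lambda>i\<in>I. f i (x i)) \<in> measurable (PiM I M) (PiM I N)"
    using f by (intro measurable_restrict measurable_compose[OF measurable_component_singleton]) auto
  show ?thesis
  proof (rule N.PiM_eqI)
    fix A assume A: "\<And>i. i \<in> I \<Longrightarrow> A i \<in> sets (N i)"
    have "(\<lambda>x. \<lambda>i\<in>I. f i (x i)) -` PiE I A \<inter> space (PiM I M)
        = PiE I (\<lambda>i. f i -` A i \<inter> space (M i))"
      by (auto simp: space_PiM PiE_iff)
    then have "emeasure (distr (PiM I M) (PiM I N) (\<lambda>x. \<lambda>i\<in>I. f i (x i))) (PiE I A)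
        = emeasure (PiM I M) (PiE I (\<lambda>i. f i -` A i \<inter> space (M i)))"
      using A F by (simp add: emeasure_distr sets_PiM_I_finite \<open>finite I\<close>)
    also have "\<dots> = (\<Prod>i\<in>I. emeasure (M i) (f i -` A i \<inter> space (M i)))"
      using A f by (intro M.emeasure_PiM \<open>finite I\<close>) auto
    also have "\<dots> = (\<Prod>i\<in>I. emeasure (N i) (A i))"
      using A f by (intro prod.cong refl) (metis distr_f emeasure_distr)
    finally show "emeasure (distr (PiM I M) (PiM I N) (\<lambda>x. \<lambda>i\<in>I. f i (x i))) (PiE I A)
        = (\<Prod>i\<in>I. emeasure (N i) (A i))" .
  qed (auto intro: \<open>finite I\<close>)
qed

lemma density_PiM_prod:
  fixes f :: "'i \<Rightarrow> 'a \<Rightarrow> real"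
  assumes "finite I" and "product_sigma_finite M"
    and f[measurable]: "\<And>i. f i \<in> borel_measurable (M i)"
    and f_nonneg: "\<And>i x. 0 \<le> f i x"
  shows "density (PiM I M) (\<lambda>x. \<Prod>i\<in>I. f i (x i)) = PiM I (\<lambda>i. density (M i) (f i))"
proof -
  interpret M: product_sigma_finite M by fact
  interpret D: product_sigma_finite "\<lambda>i. density (M i) (f i)"
    using sigma_finite_measure.sigma_finite_iff_density_finite[OF M.sigma_finite_measures]
    by (auto simp: product_sigma_finite_def)
  show ?thesis
  proof (rule D.PiM_eqI)
    fix A assume A: "\<And>i. i \<in> I \<Longrightarrow> A i \<in> sets (density (M i) (f i))"
    have PiE_A: "PiE I A \<in> sets (PiM I M)"
      using A \<open>finite I\<close> by (auto intro!: sets_PiM_I_finite)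
    have "emeasure (density (PiM I M) (\<lambda>x. \<Prod>i\<in>I. f i (x i))) (PiE I A)
        = (\<integral>\<^sup>+ x. ennreal (\<Prod>i\<in>I. f i (x i)) * indicator (PiE I A) x \<partial>PiM I M)"
      by (rule emeasure_density[OF _ PiE_A]) measurable
    also have "\<dots> = (\<integral>\<^sup>+ x. (\<Prod>i\<in>I. ennreal (f i (x i)) * indicator (A i) (x i)) \<partial>PiM I M)"
    proof (rule nn_integral_cong)
      fix x assume "x \<in> space (PiM I M)"
      then have "indicator (PiE I A) x = (\<Prod>i\<in>I. indicator (A i) (x i) :: ennreal)"
        using \<open>finite I\<close> by (auto simp: space_PiM PiE_iff split: split_indicator)
      then show "ennreal (\<Prod>i\<in>I. f i (x i)) * indicator (PiE I A) x
          = (\<Prod>i\<in>I. ennreal (f i (x i)) * indicator (A i) (x i))"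
        by (simp add: prod.distrib prod_ennreal f_nonneg)
    qed
    also have "\<dots> = (\<Prod>i\<in>I. \<integral>\<^sup>+ y. ennreal (f i y) * indicator (A i) y \<partial>M i)"
      using A \<open>finite I\<close> by (intro M.product_nn_integral_prod) auto
    also have "\<dots> = (\<Prod>i\<in>I. emeasure (density (M i) (f i)) (A i))"
      using A by (intro prod.cong refl) (simp add: emeasure_density)
    finally show "emeasure (density (PiM I M) (\<lambda>x. \<Prod>i\<in>I. f i (x i))) (PiE I A)
        = (\<Prod>i\<in>I. emeasure (density (M i) (f i)) (A i))" .
  qed (auto intro!: sets_PiM_cong \<open>finite I\<close>)
qed

lemma integral_PiM_sum_components:
  fixes g :: "'i \<Rightarrow> 'a \<Rightarrow> real"
  assumes M: "\<And>i. i \<in> I \<Longrightarrow> prob_space (M i)"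
    and g: "\<And>i. i \<in> I \<Longrightarrow> integrable (M i) (g i)"
  shows "(\<integral>x. (\<Sum>i\<in>I. g i (x i)) \<partial>PiM I M) = (\<Sum>i\<in>I. integral\<^sup>L (M i) (g i))"
proof -
  have marginal: "distr (PiM I M) (M i) (\<lambda>x. x i) = M i" if "i \<in> I" for i
    using M that by (rule distr_PiM_component)
  have "integrable (PiM I M) (\<lambda>x. g i (x i))" if i: "i \<in> I" for i
    using g[OF i] marginal[OF i] by (intro integrable_distr[OF measurable_component_singleton[OF i]]) simp
  then have "(\<integral>x. (\<Sum>i\<in>I. g i (x i)) \<partial>PiM I M) = (\<Sum>i\<in>I. \<integral>x. g i (x i) \<partial>PiM I M)"
    by (intro Bochner_Integration.integral_sum)
  also have "\<dots> = (\<Sum>i\<in>I. integral\<^sup>L (M i) (g i))"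
  proof (rule sum.cong[OF refl])
    fix i assume i: "i \<in> I"
    have "integral\<^sup>L (distr (PiM I M) (M i) (\<lambda>x. x i)) (g i) = (\<integral>x. g i (x i) \<partial>PiM I M)"
      by (rule integral_distr) (simp_all add: i borel_measurable_integrable[OF g[OF i]])
    then show "(\<integral>x. g i (x i) \<partial>PiM I M) = integral\<^sup>L (M i) (g i)"
      by (simp add: marginal[OF i])
  qed
  finally show ?thesis .
qed

lemma normal_density_abs_sigma: "normal_density \<mu> \<bar>\<sigma>\<bar> = normal_density \<mu> \<sigma>"
  by (simp add: normal_density_def fun_eq_iff)

lemma sigma_finite_normal: "sigma_finite_measure (density lborel (normal_density \<mu> \<sigma>))"
  by (subst sigma_finite_measure.sigma_finite_iff_density_finite) (auto intro: sigma_finite_lborel)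

lemma distr_normal_affine:
  assumes "0 < \<sigma>" and "a \<noteq> 0"
  shows "distr (density lborel (normal_density \<mu> \<sigma>)) lborel (\<lambda>x. a * x + b)
       = density lborel (normal_density (a * \<mu> + b) (\<bar>a\<bar> * \<sigma>))"
proof -
  interpret prob_space "density lborel (normal_density \<mu> \<sigma>)"
    using \<open>0 < \<sigma>\<close> by (rule prob_space_normal_density)
  have "distributed (density lborel (normal_density \<mu> \<sigma>)) lborel (\<lambda>x. x) (normal_density \<mu> \<sigma>)"
    unfolding distributed_def by (auto intro!: measure_eqI simp: emeasure_distr emeasure_density)
  from normal_density_affine[OF this assms, of b] show ?thesis
    unfolding distributed_def by (simp add: add.commute)
qed

lemma density_normal_density_ratio:
  assumes "0 < \<sigma>"
  shows "density (density lborel (normal_density \<mu> \<sigma>)) (\<lambda>y. normal_density m s y / normal_density \<mu> \<sigma> y)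
       = density lborel (normal_density m s)"
proof -
  have "normal_density \<mu> \<sigma> y * (normal_density m s y / normal_density \<mu> \<sigma> y) = normal_density m s y" for y
    using normal_density_pos[OF assms, of \<mu> y] by simp
  then show ?thesis
    by (simp add: density_density_eq ennreal_mult'[symmetric])
qed

lemma ln_normal_density:
  assumes "0 < \<sigma>"
  shows "ln (normal_density \<mu> \<sigma> y) = - ln (sqrt (2 * pi)) - ln \<sigma> - (y - \<mu>)\<^sup>2 / (2 * \<sigma>\<^sup>2)"
proof -
  have "sqrt (2 * pi * \<sigma>\<^sup>2) = sqrt (2 * pi) * \<sigma>" using assms by (simp add: real_sqrt_mult)
  then show ?thesis using assms by (simp add: normal_density_def ln_mult ln_div)
qed

lemma integral_ln_normal_density_ratio:
  fixes m s \<mu> \<sigma> :: real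
  assumes "0 < s" and "0 < \<sigma>"
  defines "h \<equiv> \<lambda>y. ln (normal_density m s y / normal_density \<mu> \<sigma> y)"
  shows "integrable (density lborel (normal_density m s)) h"
    and "integral\<^sup>L (density lborel (normal_density m s)) h
         = ln \<sigma> - ln s + ((m - \<mu>)\<^sup>2 + s\<^sup>2) / (2 * \<sigma>\<^sup>2) - 1/2"
proof -
  define c0 c1 c2 where "c0 = ln \<sigma> - ln s + (m - \<mu>)\<^sup>2 / (2 * \<sigma>\<^sup>2)"
    and "c1 = (m - \<mu>) / \<sigma>\<^sup>2" and "c2 = 1 / (2 * \<sigma>\<^sup>2) - 1 / (2 * s\<^sup>2)"
  have h_poly: "h y = c0 + c1 * (y - m) ^ (2 * 0 + 1) + c2 * (y - m) ^ (2 * 1)" for y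
  proof -
    have "h y = ln (normal_density m s y) - ln (normal_density \<mu> \<sigma> y)"
      unfolding h_def using normal_density_pos[OF \<open>0 < s\<close>, of m y] normal_density_pos[OF \<open>0 < \<sigma>\<close>, of \<mu> y]
      by (simp add: ln_div)
    also have "\<dots> = c0 + c1 * (y - m) ^ (2 * 0 + 1) + c2 * (y - m) ^ (2 * 1)"
      using \<open>0 < s\<close> \<open>0 < \<sigma>\<close>
      unfolding ln_normal_density[OF \<open>0 < s\<close>] ln_normal_density[OF \<open>0 < \<sigma>\<close>] c0_def c1_def c2_def
      by (simp add: field_simps power2_eq_square)
    finally show ?thesis .
  qed
  \<comment> \<open>h is a quadratic polynomial in y - m, so only the first three moments of N(m, s) enter.\<close>
  have "has_bochner_integral lborel (\<lambda>y. c0 * (normal_density m s y * (y - m) ^ (2 * 0))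
      + c1 * (normal_density m s y * (y - m) ^ (2 * 0 + 1)) + c2 * (normal_density m s y * (y - m) ^ (2 * 1)))
      (c0 * 1 + c1 * 0 + c2 * s\<^sup>2)"
    using normal_moment_even[OF \<open>0 < s\<close>, of m 0] normal_moment_odd[OF \<open>0 < s\<close>, of m 0]
      normal_moment_even[OF \<open>0 < s\<close>, of m 1]
    by (intro has_bochner_integral_add has_bochner_integral_mult_right) (simp_all add: power2_eq_square)
  then have B: "has_bochner_integral lborel (\<lambda>y. normal_density m s y * h y) (c0 + c2 * s\<^sup>2)"
    by (rule has_bochner_integral_cong[THEN iffD1, rotated -1]) (auto simp: h_poly algebra_simps)
  have [measurable]: "h \<in> borel_measurable lborel" unfolding h_def by measurable
  show "integrable (density lborel (normal_density m s)) h"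
    using B by (subst integrable_density) (auto intro: integrable.intros)
  have "integral\<^sup>L (density lborel (normal_density m s)) h = c0 + c2 * s\<^sup>2"
    using B by (subst integral_density) (auto dest: has_bochner_integral_integral_eq)
  also have "\<dots> = ln \<sigma> - ln s + ((m - \<mu>)\<^sup>2 + s\<^sup>2) / (2 * \<sigma>\<^sup>2) - 1/2"
    using \<open>0 < s\<close> \<open>0 < \<sigma>\<close> unfolding c0_def c2_def by (simp add: field_simps power2_eq_square)
  finally show "integral\<^sup>L (density lborel (normal_density m s)) h
         = ln \<sigma> - ln s + ((m - \<mu>)\<^sup>2 + s\<^sup>2) / (2 * \<sigma>\<^sup>2) - 1/2" .
qed

lemma KL_divergence_PiM_normal:
  fixes \<mu> \<sigma> m s :: "'i \<Rightarrow> real"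
  assumes "finite I" and \<sigma>: "\<And>i. i \<in> I \<Longrightarrow> 0 < \<sigma> i" and s: "\<And>i. i \<in> I \<Longrightarrow> 0 < s i"
  shows "KL_divergence (exp 1) (PiM I (\<lambda>i. density lborel (normal_density (\<mu> i) (\<sigma> i))))
           (PiM I (\<lambda>i. density lborel (normal_density (m i) (s i))))
       = (\<Sum>i\<in>I. ln (\<sigma> i) - ln (s i) + ((m i - \<mu> i)\<^sup>2 + (s i)\<^sup>2) / (2 * (\<sigma> i)\<^sup>2) - 1/2)"
proof -
  let ?N = "\<lambda>i. density lborel (normal_density (\<mu> i) (\<sigma> i))"
  let ?N' = "\<lambda>i. density lborel (normal_density (m i) (s i))"
  define r where "r i y = normal_density (m i) (s i) y / normal_density (\<mu> i) (\<sigma> i) y" for i y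
  define f where "f x = (\<Prod>i\<in>I. r i (x i))" for x
  have r_nonneg: "0 \<le> r i y" for i y
    by (simp add: r_def)
  have r_nonzero: "r i y \<noteq> 0" if "i \<in> I" for i y
    using that \<sigma> s normal_density_pos by (simp add: r_def less_imp_neq[symmetric])
  have f_nonneg: "0 \<le> f x" for x
    unfolding f_def by (intro prod_nonneg r_nonneg)
  have Q: "density (PiM I ?N) f = PiM I ?N'"
  proof -
    have "density (PiM I ?N) f = PiM I (\<lambda>i. density (?N i) (r i))"
      unfolding f_def using \<open>finite I\<close> r_nonneg
      by (intro density_PiM_prod) (auto simp: product_sigma_finite_def sigma_finite_normal r_def)
    also have "\<dots> = PiM I ?N'"
      using \<sigma> by (intro PiM_cong refl) (simp add: r_def density_normal_density_ratio)
    finally show ?thesis .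
  qed
  interpret P: prob_space "PiM I ?N"
    using \<sigma> by (intro prob_space_PiM) (simp add: prob_space_normal_density)
  have [measurable]: "f \<in> borel_measurable (PiM I ?N)"
    unfolding f_def r_def by measurable
  have "KL_divergence (exp 1) (PiM I ?N) (PiM I ?N') = (\<integral>x. f x * log (exp 1) (f x) \<partial>PiM I ?N)"
    unfolding Q[symmetric] by (rule P.KL_density) (auto simp: f_nonneg)
  also have "\<dots> = (\<integral>x. ln (f x) \<partial>PiM I ?N')"
    unfolding Q[symmetric] by (subst integral_density) (auto simp: f_nonneg log_def)
  also have "\<dots> = (\<integral>x. (\<Sum>i\<in>I. ln (r i (x i))) \<partial>PiM I ?N')"
    unfolding f_def using \<open>finite I\<close> r_nonzero by (intro Bochner_Integration.integral_cong refl ln_prod) auto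
  also have "\<dots> = (\<Sum>i\<in>I. integral\<^sup>L (?N' i) (\<lambda>y. ln (r i y)))"
    using \<sigma> s unfolding r_def
    by (intro integral_PiM_sum_components) (simp_all add: prob_space_normal_density integral_ln_normal_density_ratio)
  also have "\<dots> = (\<Sum>i\<in>I. ln (\<sigma> i) - ln (s i) + ((m i - \<mu> i)\<^sup>2 + (s i)\<^sup>2) / (2 * (\<sigma> i)\<^sup>2) - 1/2)"
    using \<sigma> s unfolding r_def by (intro sum.cong refl) (simp add: integral_ln_normal_density_ratio)
  finally show ?thesis .
qed

lemma pushforward_eq_PiM_normal:
  assumes \<sigma>: "\<forall>i<d. 0 < \<sigma> i" and a: "\<forall>i<d. a i \<noteq> 0"
  shows "pushforward d \<mu> \<sigma> a b
       = PiM {..<d} (\<lambda>i. density lborel (normal_density (a i * \<mu> i + b i) (\<bar>a i\<bar> * \<sigma> i)))"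
    (is "_ = PiM {..<d} ?N'")
proof -
  let ?N = "\<lambda>i. density lborel (normal_density (\<mu> i) (\<sigma> i))"
  have "pushforward d \<mu> \<sigma> a b = distr (PiM {..<d} ?N) (PiM {..<d} ?N') (diag_flow d a b)"
    unfolding pushforward_def diag_gaussian_def by (intro distr_cong refl sets_PiM_cong) simp_all
  also have "\<dots> = PiM {..<d} ?N'"
    unfolding diag_flow_def
  proof (rule distr_PiM_componentwise)
    fix i assume "i \<in> {..<d}"
    then have "distr (?N i) (?N' i) (\<lambda>x. a i * x + b i) = distr (?N i) lborel (\<lambda>x. a i * x + b i)"
      by (intro distr_cong) simp_all
    then show "distr (?N i) (?N' i) (\<lambda>x. a i * x + b i) = ?N' i"
      using \<sigma> a \<open>i \<in> {..<d}\<close> by (simp add: distr_normal_affine)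
  qed (simp_all add: product_sigma_finite_def sigma_finite_normal)
  finally show ?thesis .
qed

lemma ln_less_minus_one:
  fixes x :: real
  assumes "0 < x" and "x \<noteq> 1"
  shows "ln x < x - 1"
proof -
  have "sqrt x \<noteq> 1" using assms by auto
  then have "0 < (sqrt x - 1)\<^sup>2" by simp
  then have "2 * (sqrt x - 1) < x - 1"
    using \<open>0 < x\<close> by (simp add: power2_eq_square algebra_simps)
  moreover have "ln x = 2 * ln (sqrt x)" using \<open>0 < x\<close> by (simp add: ln_sqrt)
  moreover have "ln (sqrt x) \<le> sqrt x - 1" using \<open>0 < x\<close> by (intro ln_le_minus_one) simp
  ultimately show ?thesis by (smt (verit))
qed

text \<open>The i-th summand of D_KL[P' || P] in the standardised coordinates u = (w - mu)/sigma,
  v = (w' - mu)/sigma, after eliminating b by the constraint w' = a w + b.\<close>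
definition flow_cost :: "real \<Rightarrow> real \<Rightarrow> real \<Rightarrow> real" where
  "flow_cost u v a = - ln \<bar>a\<bar> + ((v - a * u)\<^sup>2 + a\<^sup>2) / 2 - 1/2"

definition flow_root :: "real \<Rightarrow> real \<Rightarrow> real \<Rightarrow> real" where
  "flow_root u v \<delta> = (u * v + \<delta> * sqrt (4 + u\<^sup>2 * (4 + v\<^sup>2))) / (2 * (1 + u\<^sup>2))"

lemma flow_cost_uminus: "flow_cost u v (- a) = flow_cost u v a + 2 * a * u * v"
  unfolding flow_cost_def by (simp add: power2_eq_square field_simps)

lemma flow_root_quadratic:
  assumes "\<delta> \<in> {-1, 1}"
  shows "(1 + u\<^sup>2) * (flow_root u v \<delta>)\<^sup>2 - u * v * flow_root u v \<delta> - 1 = 0"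
proof -
  define c k T where "c = 1 + u\<^sup>2" and "k = u * v" and "T = \<delta> * sqrt (4 + u\<^sup>2 * (4 + v\<^sup>2))"
  have "c \<noteq> 0" unfolding c_def by (smt (verit) zero_le_power2)
  have "0 \<le> 4 + u\<^sup>2 * (4 + v\<^sup>2)" by simp
  then have "T\<^sup>2 = k\<^sup>2 + 4 * c"
    using assms unfolding T_def k_def c_def by (auto simp: algebra_simps)
  moreover have "c * ((k + T) / (2 * c))\<^sup>2 - k * ((k + T) / (2 * c)) - 1 = (T\<^sup>2 - k\<^sup>2 - 4 * c) / (4 * c)"
    using \<open>c \<noteq> 0\<close> by (simp add: field_simps power2_eq_square)
  ultimately show ?thesis
    unfolding flow_root_def c_def[symmetric] k_def[symmetric] T_def[symmetric] by simp
qed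

lemma flow_root_sign: "flow_root u v (-1) < 0" "0 < flow_root u v 1"
proof -
  have "\<bar>u * v\<bar> < sqrt (4 + u\<^sup>2 * (4 + v\<^sup>2))"
    by (rule real_less_rsqrt) (simp add: power2_eq_square algebra_simps add_pos_nonneg)
  moreover have "0 < 1 + u\<^sup>2" by (simp add: add_pos_nonneg)
  ultimately show "flow_root u v (-1) < 0" "0 < flow_root u v 1"
    unfolding flow_root_def by (auto simp: divide_neg_pos)
qed

lemma flow_cost_less_same_sign:
  assumes root: "(1 + u\<^sup>2) * r\<^sup>2 - u * v * r - 1 = 0" and "0 < t * r" and "t \<noteq> r"
  shows "flow_cost u v r < flow_cost u v t"
proof -
  have "r \<noteq> 0" using \<open>0 < t * r\<close> by auto
  have "0 < t / r" using \<open>0 < t * r\<close> by (simp add: zero_less_mult_iff zero_less_divide_iff)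
  have "t / r \<noteq> 1" using \<open>t \<noteq> r\<close> \<open>r \<noteq> 0\<close> by simp
  have inv_r: "(1 + u\<^sup>2) * r - u * v = 1 / r"
    using root \<open>r \<noteq> 0\<close> by (simp add: field_simps power2_eq_square)
  have "t \<noteq> 0" using \<open>0 < t * r\<close> by auto
  \<comment> \<open>At the critical point r the excess is (t/r - 1 - ln (t/r)) + (1 + u^2) (t - r)^2 / 2.\<close>
  have "ln (t / r) = ln (\<bar>t\<bar> / \<bar>r\<bar>)"
    using \<open>0 < t / r\<close> by (metis abs_divide abs_of_pos)
  also have "\<dots> = ln (\<bar>t\<bar>) - ln (\<bar>r\<bar>)"
    using \<open>t \<noteq> 0\<close> \<open>r \<noteq> 0\<close> by (simp add: ln_div)
  finally have "ln (\<bar>t\<bar>) - ln (\<bar>r\<bar>) = ln (t / r)" ..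
  moreover have "((1 + u\<^sup>2) * r - u * v) * (t - r) = t / r - 1"
    unfolding inv_r using \<open>r \<noteq> 0\<close> by (simp add: field_simps)
  moreover have "flow_cost u v t - flow_cost u v r
      = - (ln (\<bar>t\<bar>) - ln (\<bar>r\<bar>)) + ((1 + u\<^sup>2) * r - u * v) * (t - r) + (1 + u\<^sup>2) * (t - r)\<^sup>2 / 2"
    unfolding flow_cost_def by (simp add: power2_eq_square field_simps)
  moreover have "0 \<le> (1 + u\<^sup>2) * (t - r)\<^sup>2 / 2" by simp
  ultimately show ?thesis
    using ln_less_minus_one[OF \<open>0 < t / r\<close> \<open>t / r \<noteq> 1\<close>] by linarith
qed

lemma flow_cost_root_le:
  assumes "\<delta> \<in> {-1, 1}" and "0 \<le> \<delta> * (u * v)" and "t \<noteq> 0"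
  shows "flow_cost u v (flow_root u v \<delta>) \<le> flow_cost u v t"
proof -
  define r where "r = flow_root u v \<delta>"
  have root: "(1 + u\<^sup>2) * r\<^sup>2 - u * v * r - 1 = 0"
    unfolding r_def using assms(1) by (rule flow_root_quadratic)
  have le: "flow_cost u v r \<le> flow_cost u v s" if "0 < s * r" for s
    using flow_cost_less_same_sign[OF root that] by (cases "s = r") auto
  have "flow_cost u v r \<le> flow_cost u v t"
  proof (cases "0 < t * r")
    case False
    \<comment> \<open>t lies on the other half-line, where t u v \<le> 0, so reflecting t does not increase the cost.\<close>
    from assms(1) consider "\<delta> = 1" | "\<delta> = -1" by auto
    then have "0 < - t * r \<and> t * (u * v) \<le> 0"
    proof cases
      case 1
      then have "0 < r" using flow_root_sign by (simp add: r_def)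
      then have "t < 0" using False \<open>t \<noteq> 0\<close> by (smt (verit) mult_pos_pos)
      then show ?thesis using \<open>0 < r\<close> assms(2) 1 by (simp add: mult_nonpos_nonneg mult_neg_pos)
    next
      case 2
      then have "r < 0" using flow_root_sign by (simp add: r_def)
      then have "0 < t" using False \<open>t \<noteq> 0\<close> by (smt (verit) mult_neg_neg)
      then show ?thesis using \<open>r < 0\<close> assms(2) 2 by (simp add: mult_nonneg_nonpos mult_pos_neg)
    qed
    then have "flow_cost u v r \<le> flow_cost u v (- t)" and "t * (u * v) \<le> 0"
      using le by auto
    then show ?thesis
      unfolding flow_cost_uminus by (simp add: algebra_simps)
  qed (rule le)
  then show ?thesis by (simp add: r_def)
qed

lemma flow_cost_minimizer_is_root:
  assumes "a \<noteq> 0" and min: "\<And>t. t \<noteq> 0 \<Longrightarrow> flow_cost u v a \<le> flow_cost u v t"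
  shows "\<exists>\<delta>\<in>{-1, 1}. a = flow_root u v \<delta>"
proof (rule ccontr)
  assume not_root: "\<not> ?thesis"
  define r where "r = flow_root u v (sgn a)"
  have sgn: "sgn a \<in> {-1, 1}" using \<open>a \<noteq> 0\<close> by (simp add: sgn_if)
  have "0 < a * r"
  proof (cases "0 < a")
    case True
    then show ?thesis using flow_root_sign[of u v] by (simp add: r_def)
  next
    case False
    then have "a < 0" using \<open>a \<noteq> 0\<close> by simp
    then show ?thesis using flow_root_sign[of u v] by (simp add: r_def mult_neg_neg)
  qed
  moreover have "a \<noteq> r" using not_root sgn by (auto simp: r_def)
  ultimately have "flow_cost u v r < flow_cost u v a"
    using flow_root_quadratic[OF sgn] by (intro flow_cost_less_same_sign) (auto simp: r_def)
  moreover have "r \<noteq> 0" using \<open>0 < a * r\<close> by auto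
  ultimately show False using min[OF \<open>r \<noteq> 0\<close>] by linarith
qed

lemma sum_le_update_imp_le:
  fixes f :: "'i \<Rightarrow> 'a \<Rightarrow> 'b::ordered_ab_group_add"
  assumes "finite I" and "i \<in> I" and le: "(\<Sum>j\<in>I. f j (x j)) \<le> (\<Sum>j\<in>I. f j ((x(i := t)) j))"
  shows "f i (x i) \<le> f i t"
proof -
  have "(\<Sum>j\<in>I. f j ((x(i := t)) j)) = f i t + (\<Sum>j\<in>I - {i}. f j (x j))"
    using assms(1,2) by (subst sum.remove[of _ i]) (auto intro!: sum.cong)
  moreover have "(\<Sum>j\<in>I. f j (x j)) = f i (x i) + (\<Sum>j\<in>I - {i}. f j (x j))"
    using assms(1,2) by (rule sum.remove)
  ultimately show ?thesis using le by simp
qed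

lemma KL_obj_feasible:
  assumes \<sigma>: "\<forall>i<d. 0 < \<sigma> i" and ab: "(a, b) \<in> feasible d w w'"
  shows "KL_obj d \<mu> \<sigma> a b = (\<Sum>i<d. flow_cost ((w i - \<mu> i) / \<sigma> i) ((w' i - \<mu> i) / \<sigma> i) (a i))"
proof -
  have a: "\<forall>i<d. a i \<noteq> 0" and b: "\<forall>i<d. b i = w' i - a i * w i"
    using ab by (auto simp: feasible_def)
  have "KL_obj d \<mu> \<sigma> a b = (\<Sum>i<d. ln (\<sigma> i) - ln (\<bar>a i\<bar> * \<sigma> i)
      + ((a i * \<mu> i + b i - \<mu> i)\<^sup>2 + (\<bar>a i\<bar> * \<sigma> i)\<^sup>2) / (2 * (\<sigma> i)\<^sup>2) - 1/2)"
    unfolding KL_obj_def pushforward_eq_PiM_normal[OF \<sigma> a] diag_gaussian_def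
    using \<sigma> a by (intro KL_divergence_PiM_normal) auto
  also have "\<dots> = (\<Sum>i<d. flow_cost ((w i - \<mu> i) / \<sigma> i) ((w' i - \<mu> i) / \<sigma> i) (a i))"
  proof (rule sum.cong[OF refl])
    fix i assume "i \<in> {..<d}"
    then have "0 < \<sigma> i" "a i \<noteq> 0" "b i = w' i - a i * w i" using \<sigma> a b by auto
    moreover have "ln (\<bar>a i\<bar> * \<sigma> i) = ln \<bar>a i\<bar> + ln (\<sigma> i)"
      using \<open>0 < \<sigma> i\<close> \<open>a i \<noteq> 0\<close> by (simp add: ln_mult)
    moreover have "((a i * \<mu> i + (w' i - a i * w i) - \<mu> i)\<^sup>2 + (\<bar>a i\<bar> * \<sigma> i)\<^sup>2) / (2 * (\<sigma> i)\<^sup>2)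
        = (((w' i - \<mu> i) / \<sigma> i - a i * ((w i - \<mu> i) / \<sigma> i))\<^sup>2 + (a i)\<^sup>2) / 2"
      using \<open>0 < \<sigma> i\<close> by (simp add: field_simps power2_eq_square)
    ultimately show "ln (\<sigma> i) - ln (\<bar>a i\<bar> * \<sigma> i)
        + ((a i * \<mu> i + b i - \<mu> i)\<^sup>2 + (\<bar>a i\<bar> * \<sigma> i)\<^sup>2) / (2 * (\<sigma> i)\<^sup>2) - 1/2
      = flow_cost ((w i - \<mu> i) / \<sigma> i) ((w' i - \<mu> i) / \<sigma> i) (a i)"
      unfolding flow_cost_def by simp
  qed
  finally show ?thesis .
qed

lemma KL_obj_minimizer_exists:
  assumes "\<forall>i<d. 0 < \<sigma> i"
  shows "\<exists>(a, b)\<in>feasible d w w'. \<forall>(a', b')\<in>feasible d w w'. KL_obj d \<mu> \<sigma> a b \<le> KL_obj d \<mu> \<sigma> a' b'"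
proof -
  define u v where "u i = (w i - \<mu> i) / \<sigma> i" and "v i = (w' i - \<mu> i) / \<sigma> i" for i
  define a where "a i = flow_root (u i) (v i) (if 0 \<le> u i * v i then 1 else -1)" for i
  define b where "b i = w' i - a i * w i" for i
  have "a i \<noteq> 0" for i
    unfolding a_def by (smt (verit) flow_root_sign)
  then have "(a, b) \<in> feasible d w w'"
    by (simp add: feasible_def b_def)
  moreover have "KL_obj d \<mu> \<sigma> a b \<le> KL_obj d \<mu> \<sigma> a' b'" if "(a', b') \<in> feasible d w w'" for a' b'
  proof -
    have "flow_cost (u i) (v i) (a i) \<le> flow_cost (u i) (v i) (a' i)" if "i < d" for i
      using \<open>(a', b') \<in> feasible d w w'\<close> \<open>i < d\<close> unfolding a_def
      by (intro flow_cost_root_le) (auto simp: feasible_def)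
    then have "(\<Sum>i<d. flow_cost (u i) (v i) (a i)) \<le> (\<Sum>i<d. flow_cost (u i) (v i) (a' i))"
      by (intro sum_mono) simp
    then show ?thesis
      unfolding KL_obj_feasible[OF assms \<open>(a, b) \<in> feasible d w w'\<close>] KL_obj_feasible[OF assms that]
        u_def v_def .
  qed
  ultimately show ?thesis by blast
qed

lemma KL_obj_minimizer_coordinate:
  assumes \<sigma>: "\<forall>i<d. 0 < \<sigma> i" and ab: "(a, b) \<in> feasible d w w'"
    and min: "\<forall>(a', b')\<in>feasible d w w'. KL_obj d \<mu> \<sigma> a b \<le> KL_obj d \<mu> \<sigma> a' b'"
    and "i < d" and "t \<noteq> 0"
  shows "flow_cost ((w i - \<mu> i) / \<sigma> i) ((w' i - \<mu> i) / \<sigma> i) (a i)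
       \<le> flow_cost ((w i - \<mu> i) / \<sigma> i) ((w' i - \<mu> i) / \<sigma> i) t"
proof -
  have ab': "(a(i := t), b(i := w' i - t * w i)) \<in> feasible d w w'"
    using ab \<open>t \<noteq> 0\<close> by (auto simp: feasible_def)
  then have "KL_obj d \<mu> \<sigma> a b \<le> KL_obj d \<mu> \<sigma> (a(i := t)) (b(i := w' i - t * w i))"
    using min by blast
  then show ?thesis
    unfolding KL_obj_feasible[OF \<sigma> ab] KL_obj_feasible[OF \<sigma> ab']
    by (rule sum_le_update_imp_le[OF finite_lessThan lessThan_iff[THEN iffD2, OF \<open>i < d\<close>]])
qed

lemma distr_pushforward_component:
  assumes "\<forall>i<d. 0 < \<sigma> i" and "(a, b) \<in> feasible d w w'" and "i < d"
  shows "distr (pushforward d \<mu> \<sigma> a b) lborel (\<lambda>x. x i)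
       = density lborel (normal_density (a i * (\<mu> i - w i) + w' i) (a i * \<sigma> i))"
proof -
  let ?N' = "\<lambda>i. density lborel (normal_density (a i * \<mu> i + b i) (\<bar>a i\<bar> * \<sigma> i))"
  have a: "\<forall>i<d. a i \<noteq> 0" and "b i = w' i - a i * w i" and "0 < \<sigma> i"
    using assms by (auto simp: feasible_def)
  have "distr (pushforward d \<mu> \<sigma> a b) lborel (\<lambda>x. x i) = distr (PiM {..<d} ?N') (?N' i) (\<lambda>x. x i)"
    unfolding pushforward_eq_PiM_normal[OF assms(1) a] by (intro distr_cong) simp_all
  also have "\<dots> = ?N' i"
    using assms(1,3) a by (intro distr_PiM_component) (auto intro: prob_space_normal_density)
  also have "\<dots> = density lborel (normal_density (a i * (\<mu> i - w i) + w' i) \<bar>a i * \<sigma> i\<bar>)"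
  proof -
    have "a i * \<mu> i + b i = a i * (\<mu> i - w i) + w' i"
      using \<open>b i = w' i - a i * w i\<close> by (simp add: algebra_simps)
    moreover have "\<bar>a i\<bar> * \<sigma> i = \<bar>a i * \<sigma> i\<bar>"
      using \<open>0 < \<sigma> i\<close> by (simp add: abs_mult)
    ultimately show ?thesis by (simp only:)
  qed
  also have "\<dots> = density lborel (normal_density (a i * (\<mu> i - w i) + w' i) (a i * \<sigma> i))"
    by (simp only: normal_density_abs_sigma)
  finally show ?thesis .
qed

theorem mainTheorem2:
  fixes d :: nat and \<mu> \<sigma> w w' :: "nat \<Rightarrow> real"
  assumes \<sigma>_pos: "\<forall>i<d. \<sigma> i > 0"
  defines "u \<equiv> (\<lambda>i. (w i - \<mu> i) / \<sigma> i)"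
      and "v \<equiv> (\<lambda>i. (w' i - \<mu> i) / \<sigma> i)"
  shows "(\<exists>(a, b)\<in>feasible d w w'. \<forall>(a', b')\<in>feasible d w w'.
            KL_obj d \<mu> \<sigma> a b \<le> KL_obj d \<mu> \<sigma> a' b')
       \<and> (\<forall>(a, b)\<in>feasible d w w'.
            (\<forall>(a', b')\<in>feasible d w w'. KL_obj d \<mu> \<sigma> a b \<le> KL_obj d \<mu> \<sigma> a' b') \<longrightarrow>
            (\<forall>i<d.
               (\<exists>\<delta>\<in>{-1, 1::real}.
                  a i = (u i * v i + \<delta> * sqrt (4 + (u i)\<^sup>2 * (4 + (v i)\<^sup>2))) / (2 * (1 + (u i)\<^sup>2)))
             \<and> distr (pushforward d \<mu> \<sigma> a b) lborel (\<lambda>x. x i)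
                 = density lborel (normal_density (a i * (\<mu> i - w i) + w' i) (a i * \<sigma> i))))"
proof (intro conjI KL_obj_minimizer_exists[OF \<sigma>_pos], clarify, goal_cases)
  case (1 a b i)
  then have ab: "(a, b) \<in> feasible d w w'" and "i < d" by simp_all
  have "a i \<noteq> 0" using ab \<open>i < d\<close> by (simp add: feasible_def)
  then have "\<exists>\<delta>\<in>{-1, 1}. a i = flow_root (u i) (v i) \<delta>"
    unfolding u_def v_def
    by (rule flow_cost_minimizer_is_root) (rule KL_obj_minimizer_coordinate[OF \<sigma>_pos ab 1(2) \<open>i < d\<close>])
  then show ?case
    using distr_pushforward_component[OF \<sigma>_pos ab \<open>i < d\<close>] unfolding flow_root_def by simp
qed

end
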